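(* Let $L,M$ be distributive lattices and $T:L\to M$ a surjective lattice homomorphism. Then the induced Banach lattice homomorphism $\overline T:\mathrm{FBL}\langle L\rangle\to\mathrm{FBL}\langle M\rangle$, i.e. the unique Banach lattice homomorphism with $\overline T(\delta_x)=\delta_{Tx}$ for all $x\in L$, is surjective.
   Context: For a distributive lattice $L$, $L^*$ is the set of all lattice homomorphisms $x^*:L\to[-1,1]$; for $x\in L$, $\delta_x:L^*\to\mathbb R$ is $\delta_x(x^* )=x^*(x)$. A function $f:L^*\to\mathbb R$ is positively homogeneous if $f(\lambda x^* )=\lambda f(x^* )$ whenever $\lambda\ge0$ and $\lambda x^*\in L^*$; for such $f$, $\|f\|=\sup\{\sum_{i=1}^m|f(x_i^* )|: m\in\mathbb N,\ x_i^*\in L^*,\ \sup_{x\in L}\sum_{i=1}^m|x_i^*(x)|\le1\}$. $\mathrm{FBL}\langle L\rangle$ is the norm closure of the vector sublattice generated by $\{\delta_x:x\in L\}$ inside the Banach lattice of positively homogeneous functions on $L^*$ with finite norm, with pointwise order and operations. It satisfies the universal property: for every Banach lattice $X$ and bounded lattice homomorphism $S:L\to X$ there is a unique Banach lattice homomorphism $\widehat S:\mathrm{FBL}\langle L\rangle\to X$ with $\widehat S(\delta_x)=S(x)$ and $\|\widehat S\|=\sup_{x\in L}\|Sx\|$. *)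

theory Defs
  imports Complex_Main
begin

definition lattice_hom :: "('a::lattice \<Rightarrow> 'b::lattice) \<Rightarrow> bool" where
  "lattice_hom T \<longleftrightarrow> (\<forall>a b. T (inf a b) = inf (T a) (T b) \<and> T (sup a b) = sup (T a) (T b))"

definition Lstar :: "('a::distrib_lattice \<Rightarrow> real) set" where
  "Lstar = {xs. lattice_hom xs \<and> (\<forall>x. xs x \<in> {-1..1})}"

text \<open>Functions on L* are represented as functions on all real-valued functions on L
  which vanish outside L* (so that equality is equality on L*).\<close>
definition extensional_Lstar :: "(('a::distrib_lattice \<Rightarrow> real) \<Rightarrow> real) \<Rightarrow> bool" where
  "extensional_Lstar f \<longleftrightarrow> (\<forall>xs. xs \<notin> Lstar \<longrightarrow> f xs = 0)"

definition delta :: "'a::distrib_lattice \<Rightarrow> ('a \<Rightarrow> real) \<Rightarrow> real" where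
  "delta x = (\<lambda>xs. if xs \<in> Lstar then xs x else 0)"

definition pos_homogeneous :: "(('a::distrib_lattice \<Rightarrow> real) \<Rightarrow> real) \<Rightarrow> bool" where
  "pos_homogeneous f \<longleftrightarrow>
     (\<forall>xs \<in> Lstar. \<forall>c::real. c \<ge> 0 \<longrightarrow> (\<lambda>x. c * xs x) \<in> Lstar
        \<longrightarrow> f (\<lambda>x. c * xs x) = c * f xs)"

definition fbl_norm_set :: "(('a::distrib_lattice \<Rightarrow> real) \<Rightarrow> real) \<Rightarrow> real set" where
  "fbl_norm_set f = {(\<Sum>i<m. \<bar>f (xs i)\<bar>) | (m::nat) xs.
      (\<forall>i<m. xs i \<in> Lstar) \<and> (\<forall>x. (\<Sum>i<m. \<bar>xs i x\<bar>) \<le> 1)}"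

definition fbl_norm :: "(('a::distrib_lattice \<Rightarrow> real) \<Rightarrow> real) \<Rightarrow> real" where
  "fbl_norm f = Sup (fbl_norm_set f)"

definition Hspace :: "(('a::distrib_lattice \<Rightarrow> real) \<Rightarrow> real) set" where
  "Hspace = {f. extensional_Lstar f \<and> pos_homogeneous f \<and> bdd_above (fbl_norm_set f)}"

inductive_set gen_sublattice :: "(('a::distrib_lattice \<Rightarrow> real) \<Rightarrow> real) set" where
  gen_delta: "delta x \<in> gen_sublattice"
| gen_add: "f \<in> gen_sublattice \<Longrightarrow> g \<in> gen_sublattice \<Longrightarrow> (\<lambda>xs. f xs + g xs) \<in> gen_sublattice"
| gen_scale: "f \<in> gen_sublattice \<Longrightarrow> (\<lambda>xs. c * f xs) \<in> gen_sublattice"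
| gen_max: "f \<in> gen_sublattice \<Longrightarrow> g \<in> gen_sublattice \<Longrightarrow> (\<lambda>xs. max (f xs) (g xs)) \<in> gen_sublattice"

definition FBL :: "(('a::distrib_lattice \<Rightarrow> real) \<Rightarrow> real) set" where
  "FBL = {f \<in> Hspace. \<forall>e>0. \<exists>g \<in> gen_sublattice. fbl_norm (\<lambda>xs. f xs - g xs) < e}"

definition banach_lattice_hom ::
  "((('a::distrib_lattice \<Rightarrow> real) \<Rightarrow> real) \<Rightarrow> (('b::distrib_lattice \<Rightarrow> real) \<Rightarrow> real)) \<Rightarrow> bool" where
  "banach_lattice_hom S \<longleftrightarrow>
     S ` FBL \<subseteq> FBL \<and>
     (\<forall>f\<in>FBL. \<forall>g\<in>FBL. S (\<lambda>xs. f xs + g xs) = (\<lambda>ys. S f ys + S g ys)) \<and>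
     (\<forall>f\<in>FBL. \<forall>c::real. S (\<lambda>xs. c * f xs) = (\<lambda>ys. c * S f ys)) \<and>
     (\<forall>f\<in>FBL. \<forall>g\<in>FBL. S (\<lambda>xs. max (f xs) (g xs)) = (\<lambda>ys. max (S f ys) (S g ys))) \<and>
     (\<forall>f\<in>FBL. \<forall>g\<in>FBL. S (\<lambda>xs. min (f xs) (g xs)) = (\<lambda>ys. min (S f ys) (S g ys))) \<and>
     (\<exists>C. \<forall>f\<in>FBL. fbl_norm (S f) \<le> C * fbl_norm f)"

end

theory Submission
  imports Defs
begin

text \<open>An element of the vector sublattice generated by the \<open>\<delta>\<^sub>x\<close> depends, positively
  homogeneously, only on the restriction of \<open>x\<^sup>*\<close> to an order interval \<open>[a, b]\<close>, and on such
  elements \<open>Tbar f y\<^sup>* = f (y\<^sup>* \<circ> T)\<close>. As \<open>T\<close> is onto, every generated \<open>g\<close> has a generated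
  preimage \<open>f\<close>; rescaling \<open>y\<^sup>*\<close> gives \<open>\<bar>f (y\<^sup>* \<circ> T)\<bar> \<le> \<parallel>g\<parallel> (\<bar>y\<^sup>*(T a)\<bar> + \<bar>y\<^sup>*(T b)\<bar>)\<close>, so
  truncating \<open>f\<close> yields a preimage \<open>h\<close> with \<open>\<bar>h\<bar> \<le> \<parallel>g\<parallel> (\<bar>\<delta>\<^sub>a\<bar> + \<bar>\<delta>\<^sub>b\<bar>)\<close>, hence
  \<open>\<parallel>h\<parallel> \<le> 2 \<parallel>g\<parallel>\<close>. An arbitrary \<open>g\<close> in FBL\<open>\<langle>M\<rangle>\<close> is the sum of a telescoping series of
  generated elements with summable norms; lifting each term in this controlled way gives a
  norm-convergent series in FBL\<open>\<langle>L\<rangle>\<close> whose image is \<open>g\<close>.\<close>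

lemma Lstar_mono:
  assumes "xs \<in> Lstar" "a \<le> b"
  shows "xs a \<le> xs b"
proof -
  have "xs (sup a b) = max (xs a) (xs b)"
    using assms(1) unfolding Lstar_def lattice_hom_def by (simp add: sup_max)
  then show ?thesis
    using assms(2) by (simp add: sup_absorb2)
qed

lemma Lstar_abs_le: "xs \<in> Lstar \<Longrightarrow> \<bar>xs x\<bar> \<le> 1"
  unfolding Lstar_def by (auto simp: abs_le_iff)

lemma lattice_hom_comp_mono:
  fixes y :: "'a::lattice \<Rightarrow> real" and \<phi> :: "real \<Rightarrow> real"
  assumes "lattice_hom y" "mono \<phi>"
  shows "lattice_hom (\<lambda>x. \<phi> (y x))"
  using assms min_of_mono[OF assms(2)] max_of_mono[OF assms(2)]
  unfolding lattice_hom_def by (simp add: inf_min sup_max)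

lemma Lstar_comp:
  assumes "lattice_hom T" "y \<in> Lstar"
  shows "(\<lambda>x. y (T x)) \<in> Lstar"
  using assms unfolding Lstar_def lattice_hom_def by auto

lemma Lstar_rescale:
  assumes y: "y \<in> Lstar" and u: "u > 0"
  obtains z where "z \<in> Lstar" "\<And>s. \<bar>y s\<bar> \<le> u \<Longrightarrow> y s = u * z s"
proof
  define \<phi> where "\<phi> t = max (-1) (min 1 (t / u))" for t :: real
  have "mono \<phi>"
  proof (rule monoI)
    fix s t :: real
    assume "s \<le> t"
    then have "s / u \<le> t / u" using u by (simp add: divide_right_mono)
    then show "\<phi> s \<le> \<phi> t" unfolding \<phi>_def by (auto simp: max_def min_def)
  qed
  then have "lattice_hom (\<lambda>s. \<phi> (y s))"
    using y lattice_hom_comp_mono unfolding Lstar_def by blast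
  moreover have "\<phi> t \<in> {-1..1}" for t
    unfolding \<phi>_def by auto
  ultimately show "(\<lambda>s. \<phi> (y s)) \<in> Lstar"
    unfolding Lstar_def by blast
  show "y s = u * \<phi> (y s)" if "\<bar>y s\<bar> \<le> u" for s
  proof -
    have "-1 \<le> y s / u" "y s / u \<le> 1"
      using that u by (simp_all add: le_divide_eq divide_le_eq abs_le_iff)
    then have "\<phi> (y s) = y s / u"
      unfolding \<phi>_def by simp
    then show ?thesis using u by simp
  qed
qed

lemma zero_in_fbl_norm_set: "0 \<in> fbl_norm_set f"
  unfolding fbl_norm_set_def by (rule CollectI, rule exI[of _ 0]) auto

lemma fbl_norm_nonneg: "bdd_above (fbl_norm_set f) \<Longrightarrow> 0 \<le> fbl_norm f"
  unfolding fbl_norm_def using zero_in_fbl_norm_set cSup_upper by blast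

lemma fbl_norm_setE:
  fixes f :: "('a::distrib_lattice \<Rightarrow> real) \<Rightarrow> real"
  assumes "z \<in> fbl_norm_set f"
  obtains m :: nat and X :: "nat \<Rightarrow> 'a \<Rightarrow> real"
  where "z = (\<Sum>i<m. \<bar>f (X i)\<bar>)" "\<And>i. i < m \<Longrightarrow> X i \<in> Lstar" "\<And>x. (\<Sum>i<m. \<bar>X i x\<bar>) \<le> 1"
  using assms unfolding fbl_norm_set_def by blast

lemma fbl_norm_set_le_fbl_norm:
  fixes m :: nat
  assumes "bdd_above (fbl_norm_set f)" "\<And>i. i < m \<Longrightarrow> X i \<in> Lstar" "\<And>x. (\<Sum>i<m. \<bar>X i x\<bar>) \<le> 1"
  shows "(\<Sum>i<m. \<bar>f (X i)\<bar>) \<le> fbl_norm f"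
proof -
  have "(\<Sum>i<m. \<bar>f (X i)\<bar>) \<in> fbl_norm_set f"
    unfolding fbl_norm_set_def
    by (rule CollectI, rule exI[of _ m], rule exI[of _ X]) (use assms(2,3) in auto)
  then show ?thesis unfolding fbl_norm_def using assms(1) by (rule cSup_upper)
qed

lemma abs_le_fbl_norm:
  assumes "bdd_above (fbl_norm_set f)" "xs \<in> Lstar"
  shows "\<bar>f xs\<bar> \<le> fbl_norm f"
proof -
  have "(\<Sum>i<Suc 0. \<bar>f xs\<bar>) \<le> fbl_norm f"
    by (rule fbl_norm_set_le_fbl_norm[OF assms(1)]) (use assms(2) Lstar_abs_le in auto)
  then show ?thesis by simp
qed

lemma fbl_norm_le_bound:
  assumes "\<And>z. z \<in> fbl_norm_set f \<Longrightarrow> z \<le> B"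
  shows "bdd_above (fbl_norm_set f)" "fbl_norm f \<le> B"
  by (rule bdd_aboveI, erule assms)
    (unfold fbl_norm_def, rule cSup_least, use zero_in_fbl_norm_set assms in auto)

lemma fbl_norm_dominated:
  fixes p q r :: "('a::distrib_lattice \<Rightarrow> real) \<Rightarrow> real"
  assumes p: "bdd_above (fbl_norm_set p)" and q: "bdd_above (fbl_norm_set q)"
    and "\<alpha> \<ge> 0" "\<beta> \<ge> 0"
    and dom: "\<And>xs. xs \<in> Lstar \<Longrightarrow> \<bar>r xs\<bar> \<le> \<alpha> * \<bar>p xs\<bar> + \<beta> * \<bar>q xs\<bar>"
  shows "bdd_above (fbl_norm_set r)" "fbl_norm r \<le> \<alpha> * fbl_norm p + \<beta> * fbl_norm q"
proof -
  have "z \<le> \<alpha> * fbl_norm p + \<beta> * fbl_norm q" if zin: "z \<in> fbl_norm_set r" for z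
  proof -
    obtain m :: nat and X :: "nat \<Rightarrow> 'a \<Rightarrow> real" where z: "z = (\<Sum>i<m. \<bar>r (X i)\<bar>)"
      and X: "\<And>i. i < m \<Longrightarrow> X i \<in> Lstar" and norm1: "\<And>x. (\<Sum>i<m. \<bar>X i x\<bar>) \<le> 1"
      using zin by (blast elim: fbl_norm_setE)
    have "z \<le> (\<Sum>i<m. \<alpha> * \<bar>p (X i)\<bar> + \<beta> * \<bar>q (X i)\<bar>)"
      unfolding z using X dom by (intro sum_mono) auto
    also have "\<dots> = \<alpha> * (\<Sum>i<m. \<bar>p (X i)\<bar>) + \<beta> * (\<Sum>i<m. \<bar>q (X i)\<bar>)"
      by (simp add: sum.distrib sum_distrib_left)
    also have "\<dots> \<le> \<alpha> * fbl_norm p + \<beta> * fbl_norm q"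
      using fbl_norm_set_le_fbl_norm[OF p X norm1] fbl_norm_set_le_fbl_norm[OF q X norm1] assms(3,4)
      by (intro add_mono mult_left_mono) auto
    finally show ?thesis .
  qed
  then show "bdd_above (fbl_norm_set r)" "fbl_norm r \<le> \<alpha> * fbl_norm p + \<beta> * fbl_norm q"
    by (fact fbl_norm_le_bound)+
qed

lemma summable_weighted_evaluations:
  assumes "x \<in> Lstar" "\<And>n. 0 \<le> e n" "summable e"
  shows "summable (\<lambda>n. e n * (\<bar>x (a n)\<bar> + \<bar>x (b n)\<bar>))"
proof (rule summable_comparison_test[OF _ summable_mult[OF assms(3), of 2]])
  show "\<exists>N. \<forall>n\<ge>N. norm (e n * (\<bar>x (a n)\<bar> + \<bar>x (b n)\<bar>)) \<le> 2 * e n"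
  proof (intro exI allI impI)
    fix n
    have "\<bar>x (a n)\<bar> + \<bar>x (b n)\<bar> \<le> 2"
      using Lstar_abs_le[OF assms(1), of "a n"] Lstar_abs_le[OF assms(1), of "b n"] by linarith
    have "norm (e n * (\<bar>x (a n)\<bar> + \<bar>x (b n)\<bar>)) = e n * (\<bar>x (a n)\<bar> + \<bar>x (b n)\<bar>)"
      using assms(2)[of n] by simp
    also have "\<dots> \<le> e n * 2"
      using \<open>\<bar>x (a n)\<bar> + \<bar>x (b n)\<bar> \<le> 2\<close> assms(2) by (rule mult_left_mono)
    finally show "norm (e n * (\<bar>x (a n)\<bar> + \<bar>x (b n)\<bar>)) \<le> 2 * e n"
      by linarith
  qed
qed

text \<open>The functions \<open>x \<mapsto> \<bar>x a\<bar>\<close> have norm at most 1, so the norm is countably subadditive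
  along such a series.\<close>
lemma fbl_norm_dominated_series:
  fixes r :: "('a::distrib_lattice \<Rightarrow> real) \<Rightarrow> real"
  assumes e: "\<And>n. 0 \<le> e n" "summable e"
    and dom: "\<And>x. x \<in> Lstar \<Longrightarrow> \<bar>r x\<bar> \<le> (\<Sum>n. e n * (\<bar>x (a n)\<bar> + \<bar>x (b n)\<bar>))"
  shows "bdd_above (fbl_norm_set r)" "fbl_norm r \<le> 2 * suminf e"
proof -
  have "z \<le> 2 * suminf e" if zin: "z \<in> fbl_norm_set r" for z
  proof -
    obtain m :: nat and X :: "nat \<Rightarrow> 'a \<Rightarrow> real" where z: "z = (\<Sum>i<m. \<bar>r (X i)\<bar>)"
      and X: "\<And>i. i < m \<Longrightarrow> X i \<in> Lstar" and norm1: "\<And>x. (\<Sum>i<m. \<bar>X i x\<bar>) \<le> 1"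
      using zin by (blast elim: fbl_norm_setE)
    have summ: "summable (\<lambda>n. e n * (\<bar>X i (a n)\<bar> + \<bar>X i (b n)\<bar>))" if "i < m" for i
      using summable_weighted_evaluations[OF X[OF that] e] .
    have "z \<le> (\<Sum>i<m. \<Sum>n. e n * (\<bar>X i (a n)\<bar> + \<bar>X i (b n)\<bar>))"
      unfolding z using X dom by (intro sum_mono) auto
    also have "\<dots> = (\<Sum>n. \<Sum>i<m. e n * (\<bar>X i (a n)\<bar> + \<bar>X i (b n)\<bar>))"
      using summ by (subst suminf_sum) auto
    also have "\<dots> \<le> (\<Sum>n. 2 * e n)"
    proof (rule suminf_le)
      fix n
      have "(\<Sum>i<m. e n * (\<bar>X i (a n)\<bar> + \<bar>X i (b n)\<bar>))
          = e n * ((\<Sum>i<m. \<bar>X i (a n)\<bar>) + (\<Sum>i<m. \<bar>X i (b n)\<bar>))"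
        by (simp add: sum_distrib_left distrib_left sum.distrib)
      also have "\<dots> \<le> e n * 2"
        using norm1[of "a n"] norm1[of "b n"] e(1) by (intro mult_left_mono) auto
      finally show "(\<Sum>i<m. e n * (\<bar>X i (a n)\<bar> + \<bar>X i (b n)\<bar>)) \<le> 2 * e n" by simp
    next
      show "summable (\<lambda>n. \<Sum>i<m. e n * (\<bar>X i (a n)\<bar> + \<bar>X i (b n)\<bar>))"
        using summ by (intro summable_sum) simp
      show "summable (\<lambda>n. 2 * e n)"
        using e(2) by (rule summable_mult)
    qed
    also have "\<dots> = 2 * suminf e"
      using e(2) by (rule suminf_mult)
    finally show ?thesis .
  qed
  then show "bdd_above (fbl_norm_set r)" "fbl_norm r \<le> 2 * suminf e"
    by (fact fbl_norm_le_bound)+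
qed

lemma fbl_norm_zero: "fbl_norm (\<lambda>_::'a::distrib_lattice \<Rightarrow> real. 0) = 0"
proof -
  have "fbl_norm_set (\<lambda>_::'a \<Rightarrow> real. 0) \<subseteq> {0}"
    unfolding fbl_norm_set_def by auto
  then have "fbl_norm_set (\<lambda>_::'a \<Rightarrow> real. 0) = {0}"
    using zero_in_fbl_norm_set by blast
  then show ?thesis unfolding fbl_norm_def by simp
qed

lemma Hspace_bdd: "f \<in> Hspace \<Longrightarrow> bdd_above (fbl_norm_set f)"
  unfolding Hspace_def by auto

lemma Hspace_eqI:
  assumes "f \<in> Hspace" "g \<in> Hspace" "\<And>xs. xs \<in> Lstar \<Longrightarrow> f xs = g xs"
  shows "f = g"
proof
  fix xs
  show "f xs = g xs"
    using assms unfolding Hspace_def extensional_Lstar_def by (cases "xs \<in> Lstar") auto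
qed

lemma Hspace_add:
  assumes f: "f \<in> Hspace" and g: "g \<in> Hspace"
  shows "(\<lambda>xs. f xs + g xs) \<in> Hspace"
proof -
  have "bdd_above (fbl_norm_set (\<lambda>xs. f xs + g xs))"
    by (rule fbl_norm_dominated(1)[OF Hspace_bdd[OF f] Hspace_bdd[OF g], of 1 1])
       (auto simp: abs_triangle_ineq)
  then show ?thesis
    using f g unfolding Hspace_def extensional_Lstar_def pos_homogeneous_def
    by (auto simp: algebra_simps)
qed

lemma Hspace_scale:
  assumes f: "f \<in> Hspace"
  shows "(\<lambda>xs. c * f xs) \<in> Hspace"
proof -
  have "bdd_above (fbl_norm_set (\<lambda>xs. c * f xs))"
    by (rule fbl_norm_dominated(1)[OF Hspace_bdd[OF f] Hspace_bdd[OF f], of "\<bar>c\<bar>" 0])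
       (auto simp: abs_mult)
  then show ?thesis
    using f unfolding Hspace_def extensional_Lstar_def pos_homogeneous_def
    by (auto simp: algebra_simps)
qed

lemma Hspace_max:
  assumes f: "f \<in> Hspace" and g: "g \<in> Hspace"
  shows "(\<lambda>xs. max (f xs) (g xs)) \<in> Hspace"
proof -
  have "bdd_above (fbl_norm_set (\<lambda>xs. max (f xs) (g xs)))"
    by (rule fbl_norm_dominated(1)[OF Hspace_bdd[OF f] Hspace_bdd[OF g], of 1 1]) auto
  then show ?thesis
    using f g unfolding Hspace_def extensional_Lstar_def pos_homogeneous_def
    by (auto simp: max_mult_distrib_left)
qed

lemma Hspace_diff:
  assumes "f \<in> Hspace" "g \<in> Hspace"
  shows "(\<lambda>xs. f xs - g xs) \<in> Hspace"
  using Hspace_add[OF assms(1) Hspace_scale[OF assms(2), of "-1"]] by simp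

lemma gen_Hspace:
  fixes f :: "('a::distrib_lattice \<Rightarrow> real) \<Rightarrow> real"
  shows "f \<in> gen_sublattice \<Longrightarrow> f \<in> Hspace"
proof (induction rule: gen_sublattice.induct)
  case (gen_delta x)
  have "z \<le> 1" if zin: "z \<in> fbl_norm_set (delta x)" for z
  proof -
    obtain m :: nat and X :: "nat \<Rightarrow> 'a \<Rightarrow> real" where z: "z = (\<Sum>i<m. \<bar>delta x (X i)\<bar>)"
      and X: "\<And>i. i < m \<Longrightarrow> X i \<in> Lstar" and norm1: "\<And>x. (\<Sum>i<m. \<bar>X i x\<bar>) \<le> 1"
      using zin by (blast elim: fbl_norm_setE)
    have "z = (\<Sum>i<m. \<bar>X i x\<bar>)"
      unfolding z using X by (intro sum.cong) (auto simp: delta_def)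
    then show ?thesis using norm1 by simp
  qed
  then have "bdd_above (fbl_norm_set (delta x))" by (rule fbl_norm_le_bound)
  then show ?case
    unfolding Hspace_def extensional_Lstar_def pos_homogeneous_def delta_def by auto
qed (rule Hspace_add Hspace_scale Hspace_max; assumption)+

lemma gen_FBL: "f \<in> gen_sublattice \<Longrightarrow> f \<in> FBL"
  unfolding FBL_def by (auto simp: gen_Hspace fbl_norm_zero intro!: bexI[of _ f])

lemma FBL_Hspace: "f \<in> FBL \<Longrightarrow> f \<in> Hspace"
  unfolding FBL_def by auto

lemma gen_vanishes: "f \<in> gen_sublattice \<Longrightarrow> xs \<notin> Lstar \<Longrightarrow> f xs = 0"
  using gen_Hspace unfolding Hspace_def extensional_Lstar_def by auto

lemma gen_zero: "(\<lambda>_. 0) \<in> gen_sublattice"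
  using gen_scale[OF gen_delta, of 0] by simp

lemma gen_diff:
  "f \<in> gen_sublattice \<Longrightarrow> g \<in> gen_sublattice \<Longrightarrow> (\<lambda>xs. f xs - g xs) \<in> gen_sublattice"
  using gen_add[OF _ gen_scale, of f g "-1"] by simp

lemma gen_min:
  assumes "f \<in> gen_sublattice" "g \<in> gen_sublattice"
  shows "(\<lambda>xs. min (f xs) (g xs)) \<in> gen_sublattice"
proof -
  have "(\<lambda>xs. -1 * max (-1 * f xs) (-1 * g xs)) \<in> gen_sublattice"
    using assms by (intro gen_sublattice.intros)
  moreover have "(\<lambda>xs. -1 * max (-1 * f xs) (-1 * g xs)) = (\<lambda>xs. min (f xs) (g xs))"
    by (auto simp: max_def min_def)
  ultimately show ?thesis by simp
qed

lemma gen_abs: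
  assumes "f \<in> gen_sublattice"
  shows "(\<lambda>xs. \<bar>f xs\<bar>) \<in> gen_sublattice"
proof -
  have "(\<lambda>xs. max (f xs) (-1 * f xs)) \<in> gen_sublattice"
    using assms by (intro gen_sublattice.intros)
  moreover have "(\<lambda>xs. max (f xs) (-1 * f xs)) = (\<lambda>xs. \<bar>f xs\<bar>)"
    by (auto simp: max_def)
  ultimately show ?thesis by simp
qed

lemma gen_sum:
  "(\<And>n. h n \<in> gen_sublattice) \<Longrightarrow> (\<lambda>xs. \<Sum>n<(N::nat). h n xs) \<in> gen_sublattice"
  by (induction N) (simp_all add: gen_zero gen_add)

lemma FBL_add_gen:
  assumes f: "f \<in> FBL" and g: "g \<in> gen_sublattice"
  shows "(\<lambda>xs. f xs + g xs) \<in> FBL"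
proof -
  have "\<exists>p\<in>gen_sublattice. fbl_norm (\<lambda>xs. f xs + g xs - p xs) < e" if "e > 0" for e
  proof -
    obtain p where "p \<in> gen_sublattice" "fbl_norm (\<lambda>xs. f xs - p xs) < e"
      using f \<open>e > 0\<close> unfolding FBL_def by blast
    then show ?thesis
      using g by (intro bexI[of _ "\<lambda>xs. p xs + g xs"]) (auto intro: gen_add)
  qed
  then show ?thesis
    using Hspace_add[OF FBL_Hspace[OF f] gen_Hspace[OF g]] unfolding FBL_def by blast
qed

text \<open>Every element of the generated sublattice has this property, with \<open>[a, b]\<close> spanned by the
  finitely many generators \<open>\<delta>\<^sub>x\<close> it involves.\<close>
definition homogeneous_on_interval :: "(('a::distrib_lattice \<Rightarrow> real) \<Rightarrow> real) \<Rightarrow> 'a \<Rightarrow> 'a \<Rightarrow> bool"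
  where "homogeneous_on_interval f a b \<longleftrightarrow>
    (\<forall>x\<in>Lstar. \<forall>y\<in>Lstar. \<forall>c\<ge>0. (\<forall>s. a \<le> s \<longrightarrow> s \<le> b \<longrightarrow> y s = c * x s) \<longrightarrow> f y = c * f x)"

lemma homogeneous_on_intervalI:
  assumes "\<And>x y c. x \<in> Lstar \<Longrightarrow> y \<in> Lstar \<Longrightarrow> c \<ge> 0 \<Longrightarrow>
    (\<And>s. a \<le> s \<Longrightarrow> s \<le> b \<Longrightarrow> y s = c * x s) \<Longrightarrow> f y = c * f x"
  shows "homogeneous_on_interval f a b"
  using assms unfolding homogeneous_on_interval_def by blast

lemma homogeneous_on_intervalD:
  assumes "homogeneous_on_interval f a b" "x \<in> Lstar" "y \<in> Lstar" "c \<ge> 0"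
    "\<And>s. a \<le> s \<Longrightarrow> s \<le> b \<Longrightarrow> y s = c * x s"
  shows "f y = c * f x"
  using assms unfolding homogeneous_on_interval_def by blast

lemma homogeneous_on_interval_widen:
  assumes "homogeneous_on_interval f a b" "a' \<le> a" "b \<le> b'"
  shows "homogeneous_on_interval f a' b'"
  by (rule homogeneous_on_intervalI, rule homogeneous_on_intervalD[OF assms(1)])
    (use assms(2,3) in \<open>auto intro: order_trans\<close>)

lemma homogeneous_on_interval_add:
  assumes "homogeneous_on_interval f a b" "homogeneous_on_interval g a b"
  shows "homogeneous_on_interval (\<lambda>xs. f xs + g xs) a b"
  by (rule homogeneous_on_intervalI)
    (simp add: homogeneous_on_intervalD[OF assms(1)] homogeneous_on_intervalD[OF assms(2)] distrib_left)

lemma homogeneous_on_interval_scale: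
  assumes "homogeneous_on_interval f a b"
  shows "homogeneous_on_interval (\<lambda>xs. d * f xs) a b"
  by (rule homogeneous_on_intervalI) (simp add: homogeneous_on_intervalD[OF assms])

lemma homogeneous_on_interval_max:
  assumes "homogeneous_on_interval f a b" "homogeneous_on_interval g a b"
  shows "homogeneous_on_interval (\<lambda>xs. max (f xs) (g xs)) a b"
  by (rule homogeneous_on_intervalI)
    (simp add: homogeneous_on_intervalD[OF assms(1)] homogeneous_on_intervalD[OF assms(2)]
      max_mult_distrib_left)

lemma gen_homogeneous_on_interval:
  "f \<in> gen_sublattice \<Longrightarrow> \<exists>a b. homogeneous_on_interval f a b"
proof (induction rule: gen_sublattice.induct)
  case (gen_delta x)
  have "homogeneous_on_interval (delta x) x x"
    by (rule homogeneous_on_intervalI) (simp add: delta_def)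
  then show ?case by blast
next
  case (gen_add f g)
  then obtain a1 b1 a2 b2
    where "homogeneous_on_interval f a1 b1" "homogeneous_on_interval g a2 b2" by blast
  then have "homogeneous_on_interval (\<lambda>xs. f xs + g xs) (inf a1 a2) (sup b1 b2)"
    by (intro homogeneous_on_interval_add) (auto elim: homogeneous_on_interval_widen)
  then show ?case by blast
next
  case (gen_scale f c)
  then show ?case by (blast intro: homogeneous_on_interval_scale)
next
  case (gen_max f g)
  then obtain a1 b1 a2 b2
    where "homogeneous_on_interval f a1 b1" "homogeneous_on_interval g a2 b2" by blast
  then have "homogeneous_on_interval (\<lambda>xs. max (f xs) (g xs)) (inf a1 a2) (sup b1 b2)"
    by (intro homogeneous_on_interval_max) (auto elim: homogeneous_on_interval_widen)
  then show ?case by blast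
qed

lemma FBL_telescoping_approximation:
  fixes g :: "('a::distrib_lattice \<Rightarrow> real) \<Rightarrow> real"
  assumes g: "g \<in> FBL"
  obtains G where "\<And>n. G n \<in> gen_sublattice" "G 0 = (\<lambda>_. 0)"
    "(\<lambda>n. fbl_norm (\<lambda>xs. g xs - G n xs)) \<longlonglongrightarrow> 0"
    "summable (\<lambda>n. fbl_norm (\<lambda>xs. G (Suc n) xs - G n xs))"
proof -
  have "\<forall>n. \<exists>p\<in>gen_sublattice. fbl_norm (\<lambda>xs. g xs - p xs) < (1/2) ^ n"
    using g unfolding FBL_def by simp
  then obtain p where p: "\<And>n. p n \<in> gen_sublattice"
    and p_close: "\<And>n. fbl_norm (\<lambda>xs. g xs - p n xs) < (1/2) ^ n"
    by metis
  have bdd: "bdd_above (fbl_norm_set (\<lambda>xs. g xs - p n xs))" for n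
    by (intro Hspace_bdd Hspace_diff FBL_Hspace g gen_Hspace p)
  define G where "G n = (case n of 0 \<Rightarrow> (\<lambda>_. 0) | Suc m \<Rightarrow> p m)" for n
  have G_Suc: "G (Suc n) = p n" for n
    by (simp add: G_def)
  have "(\<lambda>n. fbl_norm (\<lambda>xs. g xs - p n xs)) \<longlonglongrightarrow> 0"
  proof (rule tendsto_sandwich[OF _ _ tendsto_const LIMSEQ_power_zero])
    show "\<forall>\<^sub>F n in sequentially. 0 \<le> fbl_norm (\<lambda>xs. g xs - p n xs)"
      by (intro always_eventually allI fbl_norm_nonneg bdd)
    show "\<forall>\<^sub>F n in sequentially. fbl_norm (\<lambda>xs. g xs - p n xs) \<le> (1/2) ^ n"
      by (intro always_eventually allI less_imp_le[OF p_close])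
  qed simp
  then have lim: "(\<lambda>n. fbl_norm (\<lambda>xs. g xs - G n xs)) \<longlonglongrightarrow> 0"
    using LIMSEQ_imp_Suc[where f = "\<lambda>n. fbl_norm (\<lambda>xs. g xs - G n xs)"] by (simp add: G_Suc)
  have increment: "fbl_norm (\<lambda>xs. p (Suc n) xs - p n xs) \<le> 3 * (1/2) ^ n" for n
  proof -
    have "fbl_norm (\<lambda>xs. p (Suc n) xs - p n xs)
        \<le> 1 * fbl_norm (\<lambda>xs. g xs - p (Suc n) xs) + 1 * fbl_norm (\<lambda>xs. g xs - p n xs)"
      by (rule fbl_norm_dominated(2)[OF bdd bdd]) auto
    also have "\<dots> \<le> (1/2) ^ Suc n + (1/2) ^ n"
      using p_close[of n] p_close[of "Suc n"] by simp
    also have "\<dots> \<le> 3 * (1/2) ^ n"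
      by simp
    finally show ?thesis .
  qed
  have "summable (\<lambda>n. fbl_norm (\<lambda>xs. p (Suc n) xs - p n xs))"
  proof (rule summable_comparison_test[OF _ summable_mult[OF summable_geometric, of "1/2" 3]])
    have "0 \<le> fbl_norm (\<lambda>xs. p (Suc n) xs - p n xs)" for n
      by (intro fbl_norm_nonneg Hspace_bdd Hspace_diff gen_Hspace p)
    then show "\<exists>N. \<forall>n\<ge>N. norm (fbl_norm (\<lambda>xs. p (Suc n) xs - p n xs)) \<le> 3 * (1/2) ^ n"
      using increment by simp
  qed simp
  then have "summable (\<lambda>n. fbl_norm (\<lambda>xs. G (Suc n) xs - G n xs))"
    using summable_Suc_iff[where f = "\<lambda>n. fbl_norm (\<lambda>xs. G (Suc n) xs - G n xs)"]
    by (simp add: G_Suc)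
  moreover have "G n \<in> gen_sublattice" for n
    by (cases n) (simp_all add: G_def p gen_zero)
  moreover have "G 0 = (\<lambda>_. 0)"
    by (simp add: G_def)
  ultimately show ?thesis
    using that lim by blast
qed

lemma gen_series_in_FBL:
  fixes h :: "nat \<Rightarrow> ('a::distrib_lattice \<Rightarrow> real) \<Rightarrow> real"
  assumes h: "\<And>n. h n \<in> gen_sublattice"
    and e: "\<And>n. 0 \<le> e n" "summable e"
    and dom: "\<And>n x. x \<in> Lstar \<Longrightarrow> \<bar>h n x\<bar> \<le> e n * (\<bar>x (a n)\<bar> + \<bar>x (b n)\<bar>)"
  defines "F \<equiv> \<lambda>xs. \<Sum>n. h n xs"
  shows "F \<in> FBL" "(\<lambda>N. fbl_norm (\<lambda>xs. F xs - (\<Sum>n<N. h n xs))) \<longlonglongrightarrow> 0"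
proof -
  have e_shift: "summable (\<lambda>n. e (n + N))" for N
    using e(2) by simp
  have weighted: "summable (\<lambda>n. e (n + N) * (\<bar>x (a (n + N))\<bar> + \<bar>x (b (n + N))\<bar>))"
    if "x \<in> Lstar" for x N
    by (rule summable_weighted_evaluations[OF that e(1) e_shift])
  have abs_summable: "summable (\<lambda>n. \<bar>h (n + N) x\<bar>)" if "x \<in> Lstar" for x N
    by (rule summable_comparison_test[OF _ weighted[OF that]]) (use dom that in auto)
  have summable_h: "summable (\<lambda>n. h n x)" if "x \<in> Lstar" for x
    using summable_rabs_cancel[OF abs_summable[OF that, of 0]] by simp
  have tail: "\<bar>F x - (\<Sum>n<N. h n x)\<bar> \<le> (\<Sum>n. e (n + N) * (\<bar>x (a (n + N))\<bar> + \<bar>x (b (n + N))\<bar>))"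
    if x: "x \<in> Lstar" for x N
  proof -
    from suminf_minus_initial_segment[OF summable_h[OF x], of N]
    have "F x - (\<Sum>n<N. h n x) = (\<Sum>n. h (n + N) x)"
      unfolding F_def by simp
    also have "\<bar>\<dots>\<bar> \<le> (\<Sum>n. \<bar>h (n + N) x\<bar>)"
      by (rule summable_rabs[OF abs_summable[OF x]])
    also have "\<dots> \<le> (\<Sum>n. e (n + N) * (\<bar>x (a (n + N))\<bar> + \<bar>x (b (n + N))\<bar>))"
      by (rule suminf_le[OF _ abs_summable[OF x] weighted[OF x]]) (use dom x in auto)
    finally show ?thesis .
  qed
  have tail_bdd: "bdd_above (fbl_norm_set (\<lambda>xs. F xs - (\<Sum>n<N. h n xs)))"
    and tail_norm: "fbl_norm (\<lambda>xs. F xs - (\<Sum>n<N. h n xs)) \<le> 2 * (\<Sum>n. e (n + N))" for N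
    using fbl_norm_dominated_series[OF _ e_shift tail, of N] e(1) by auto
  have "(\<lambda>N. \<Sum>n. e (n + N)) \<longlonglongrightarrow> 0"
    using tendsto_diff[OF tendsto_const summable_LIMSEQ[OF e(2)], of "suminf e"]
    by (simp add: suminf_minus_initial_segment[OF e(2)])
  then have tail_lim: "(\<lambda>N. 2 * (\<Sum>n. e (n + N))) \<longlonglongrightarrow> 0"
    by (rule tendsto_mult_right_zero)
  show conv: "(\<lambda>N. fbl_norm (\<lambda>xs. F xs - (\<Sum>n<N. h n xs))) \<longlonglongrightarrow> 0"
    by (rule tendsto_sandwich[OF _ _ tendsto_const tail_lim])
      (intro always_eventually allI fbl_norm_nonneg tail_bdd tail_norm)+
  have "extensional_Lstar F"
    unfolding extensional_Lstar_def F_def by (simp add: gen_vanishes[OF h])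
  moreover have "pos_homogeneous F"
  proof -
    have "pos_homogeneous (h n)" for n
      using gen_Hspace[OF h] unfolding Hspace_def by blast
    then show ?thesis
      unfolding pos_homogeneous_def F_def by (simp add: suminf_mult summable_h)
  qed
  moreover have "bdd_above (fbl_norm_set F)"
    using tail_bdd[of 0] by simp
  ultimately have "F \<in> Hspace"
    unfolding Hspace_def by blast
  moreover have "\<exists>p\<in>gen_sublattice. fbl_norm (\<lambda>xs. F xs - p xs) < \<epsilon>" if eps: "\<epsilon> > 0" for \<epsilon>
  proof -
    obtain N where N: "fbl_norm (\<lambda>xs. F xs - (\<Sum>n<N. h n xs)) < \<epsilon>"
      using order_tendstoD(2)[OF conv eps] by (auto simp: eventually_sequentially)
    show ?thesis
      by (rule bexI[OF _ gen_sum[of h N, OF h]]) (rule N)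
  qed
  ultimately show "F \<in> FBL"
    unfolding FBL_def by blast
qed

locale induced_fbl_hom =
  fixes T :: "'a::distrib_lattice \<Rightarrow> 'b::distrib_lattice"
    and Tbar :: "(('a \<Rightarrow> real) \<Rightarrow> real) \<Rightarrow> (('b \<Rightarrow> real) \<Rightarrow> real)"
  assumes lattice_hom_T: "lattice_hom T"
    and surj_T: "surj T"
    and Tbar_hom: "banach_lattice_hom Tbar"
    and Tbar_delta: "\<And>x. Tbar (delta x) = delta (T x)"
begin

lemma Tbar_FBL: "f \<in> FBL \<Longrightarrow> Tbar f \<in> FBL"
  using Tbar_hom unfolding banach_lattice_hom_def by auto

lemma Tbar_add:
  "f \<in> FBL \<Longrightarrow> g \<in> FBL \<Longrightarrow> Tbar (\<lambda>xs. f xs + g xs) = (\<lambda>ys. Tbar f ys + Tbar g ys)"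
  using Tbar_hom unfolding banach_lattice_hom_def by auto

lemma Tbar_scale: "f \<in> FBL \<Longrightarrow> Tbar (\<lambda>xs. c * f xs) = (\<lambda>ys. c * Tbar f ys)"
  using Tbar_hom unfolding banach_lattice_hom_def by auto

lemma Tbar_max:
  "f \<in> FBL \<Longrightarrow> g \<in> FBL \<Longrightarrow> Tbar (\<lambda>xs. max (f xs) (g xs)) = (\<lambda>ys. max (Tbar f ys) (Tbar g ys))"
  using Tbar_hom unfolding banach_lattice_hom_def by auto

lemma Tbar_gen_eval: "f \<in> gen_sublattice \<Longrightarrow> y \<in> Lstar \<Longrightarrow> Tbar f y = f (\<lambda>x. y (T x))"
proof (induction arbitrary: y rule: gen_sublattice.induct)
  case (gen_delta x)
  have "Tbar (delta x) y = delta (T x) y"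
    by (simp add: Tbar_delta)
  then show ?case
    using gen_delta Lstar_comp[OF lattice_hom_T] by (simp add: delta_def)
qed (simp_all add: Tbar_add Tbar_scale Tbar_max gen_FBL)

lemma Tbar_sum:
  fixes N :: nat
  assumes "\<And>n. h n \<in> gen_sublattice"
  shows "Tbar (\<lambda>xs. \<Sum>n<N. h n xs) = (\<lambda>ys. \<Sum>n<N. Tbar (h n) ys)"
proof (induction N)
  case 0
  show ?case
    using Tbar_scale[OF gen_FBL[OF gen_delta], where c = 0] by simp
next
  case (Suc N)
  then show ?case
    using Tbar_add[OF gen_FBL[OF gen_sum[of h N, OF assms]] gen_FBL[OF assms]] by simp
qed

lemma Tbar_gen_surj: "g \<in> gen_sublattice \<Longrightarrow> \<exists>f\<in>gen_sublattice. Tbar f = g"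
proof (induction rule: gen_sublattice.induct)
  case (gen_delta y)
  obtain x where "y = T x"
    using surj_T by (metis surjD)
  then show ?case
    by (intro bexI[of _ "delta x"]) (auto simp: Tbar_delta intro: gen_sublattice.intros)
next
  case (gen_add f g)
  then obtain f' g' where "f' \<in> gen_sublattice" "g' \<in> gen_sublattice" "Tbar f' = f" "Tbar g' = g"
    by blast
  then show ?case
    by (intro bexI[of _ "\<lambda>xs. f' xs + g' xs"]) (auto simp: Tbar_add gen_FBL intro: gen_sublattice.intros)
next
  case (gen_scale f c)
  then obtain f' where "f' \<in> gen_sublattice" "Tbar f' = f"
    by blast
  then show ?case
    by (intro bexI[of _ "\<lambda>xs. c * f' xs"]) (auto simp: Tbar_scale gen_FBL intro: gen_sublattice.intros)
next
  case (gen_max f g)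
  then obtain f' g' where "f' \<in> gen_sublattice" "g' \<in> gen_sublattice" "Tbar f' = f" "Tbar g' = g"
    by blast
  then show ?case
    by (intro bexI[of _ "\<lambda>xs. max (f' xs) (g' xs)"]) (auto simp: Tbar_max gen_FBL intro: gen_sublattice.intros)
qed

text \<open>On \<open>[a, b]\<close> the functional \<open>y\<^sup>* \<circ> T\<close> agrees with \<open>u (z\<^sup>* \<circ> T)\<close>, where
  \<open>u = max \<bar>y\<^sup>*(T a)\<bar> \<bar>y\<^sup>*(T b)\<bar>\<close> and \<open>z\<^sup>*\<close> is \<open>y\<^sup>*/u\<close> truncated to \<open>[-1, 1]\<close>; so
  \<open>f (y\<^sup>* \<circ> T) = u f (z\<^sup>* \<circ> T) = u (Tbar f) z\<^sup>*\<close>, and the last factor is bounded by the norm.\<close>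
lemma gen_eval_comp_bound:
  assumes f: "f \<in> gen_sublattice" and hom: "homogeneous_on_interval f a b" and y: "y \<in> Lstar"
  shows "\<bar>f (\<lambda>x. y (T x))\<bar> \<le> fbl_norm (Tbar f) * (\<bar>y (T a)\<bar> + \<bar>y (T b)\<bar>)"
proof -
  define x where "x = (\<lambda>s. y (T s))"
  have x: "x \<in> Lstar"
    unfolding x_def by (rule Lstar_comp[OF lattice_hom_T y])
  define u where "u = max \<bar>x a\<bar> \<bar>x b\<bar>"
  have on_interval: "\<bar>y (T s)\<bar> \<le> u" if "a \<le> s" "s \<le> b" for s
    using Lstar_mono[OF x that(1)] Lstar_mono[OF x that(2)] unfolding u_def x_def by auto
  have bdd: "bdd_above (fbl_norm_set (Tbar f))"
    by (intro Hspace_bdd FBL_Hspace Tbar_FBL gen_FBL f)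
  have "\<bar>f x\<bar> \<le> u * fbl_norm (Tbar f)"
  proof (cases "u = 0")
    case True
    then have "f x = 0 * f x"
      using on_interval by (intro homogeneous_on_intervalD[OF hom x x]) (auto simp: x_def)
    then show ?thesis
      using True by simp
  next
    case False
    then have u: "u > 0"
      unfolding u_def by auto
    obtain z where z: "z \<in> Lstar" and yz: "\<And>t. \<bar>y t\<bar> \<le> u \<Longrightarrow> y t = u * z t"
      using Lstar_rescale[OF y u] by blast
    have "f x = u * f (\<lambda>s. z (T s))"
      using u on_interval yz
      by (intro homogeneous_on_intervalD[OF hom Lstar_comp[OF lattice_hom_T z] x]) (auto simp: x_def)
    also have "f (\<lambda>s. z (T s)) = Tbar f z"
      using Tbar_gen_eval[OF f z] by simp
    finally have "\<bar>f x\<bar> = u * \<bar>Tbar f z\<bar>"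
      using u by (simp add: abs_mult)
    also have "\<dots> \<le> u * fbl_norm (Tbar f)"
      using abs_le_fbl_norm[OF bdd z] u by (intro mult_left_mono) auto
    finally show ?thesis .
  qed
  also have "\<dots> \<le> (\<bar>x a\<bar> + \<bar>x b\<bar>) * fbl_norm (Tbar f)"
    using fbl_norm_nonneg[OF bdd] unfolding u_def by (intro mult_right_mono) auto
  finally show ?thesis
    unfolding x_def by (simp add: mult.commute)
qed

text \<open>Truncating a preimage of \<open>g\<close> between \<open>\<plusminus>\<parallel>g\<parallel> (\<bar>\<delta>\<^sub>a\<bar> + \<bar>\<delta>\<^sub>b\<bar>)\<close> does not change its image.\<close>
lemma Tbar_dominated_preimage:
  assumes g: "g \<in> gen_sublattice"
  obtains h a b where "h \<in> gen_sublattice" "Tbar h = g"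
    "\<And>x. x \<in> Lstar \<Longrightarrow> \<bar>h x\<bar> \<le> fbl_norm g * (\<bar>x a\<bar> + \<bar>x b\<bar>)"
proof -
  obtain f where f: "f \<in> gen_sublattice" "Tbar f = g"
    using Tbar_gen_surj[OF g] by blast
  obtain a b where hom: "homogeneous_on_interval f a b"
    using gen_homogeneous_on_interval[OF f(1)] by blast
  define \<epsilon> where "\<epsilon> = fbl_norm g"
  define w where "w = (\<lambda>xs. \<bar>delta a xs\<bar> + \<bar>delta b xs\<bar>)"
  define h where "h = (\<lambda>xs. max (min (f xs) (\<epsilon> * w xs)) (-1 * (\<epsilon> * w xs)))"
  have w_eq: "w x = \<bar>x a\<bar> + \<bar>x b\<bar>" if "x \<in> Lstar" for x
    using that unfolding w_def delta_def by simp
  have \<epsilon>: "\<epsilon> \<ge> 0"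
    unfolding \<epsilon>_def by (intro fbl_norm_nonneg Hspace_bdd gen_Hspace g)
  have h_gen: "h \<in> gen_sublattice"
    unfolding h_def w_def by (intro gen_max gen_min gen_scale gen_add gen_abs gen_delta f(1))
  have h_le: "\<bar>h x\<bar> \<le> \<epsilon> * w x" for x
  proof -
    have "0 \<le> \<epsilon> * w x"
      using \<epsilon> unfolding w_def by simp
    then show ?thesis
      unfolding h_def by (auto simp: abs_le_iff)
  qed
  have h_bound: "\<bar>h x\<bar> \<le> \<epsilon> * (\<bar>x a\<bar> + \<bar>x b\<bar>)" if "x \<in> Lstar" for x
    using h_le[of x] unfolding w_eq[OF that] .
  have "Tbar h = g"
  proof (rule Hspace_eqI)
    show "Tbar h \<in> Hspace" "g \<in> Hspace"
      by (intro FBL_Hspace Tbar_FBL gen_FBL h_gen, intro gen_Hspace g)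
    fix y :: "'b \<Rightarrow> real"
    assume y: "y \<in> Lstar"
    have "\<bar>f (\<lambda>x. y (T x))\<bar> \<le> \<epsilon> * w (\<lambda>x. y (T x))"
      using gen_eval_comp_bound[OF f(1) hom y] f(2) w_eq[OF Lstar_comp[OF lattice_hom_T y]]
      unfolding \<epsilon>_def by simp
    then have "h (\<lambda>x. y (T x)) = f (\<lambda>x. y (T x))"
      unfolding h_def by (auto simp: abs_le_iff)
    then show "Tbar h y = g y"
      using Tbar_gen_eval[OF h_gen y] Tbar_gen_eval[OF f(1) y] f(2) by simp
  qed
  then show ?thesis
    using that h_gen h_bound unfolding \<epsilon>_def by blast
qed

lemma Tbar_eq_limit:
  assumes F: "F \<in> FBL" and g: "g \<in> FBL" and S: "\<And>N. S N \<in> gen_sublattice"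
    and F_lim: "(\<lambda>N. fbl_norm (\<lambda>xs. F xs - S N xs)) \<longlonglongrightarrow> 0"
    and g_lim: "(\<lambda>N. fbl_norm (\<lambda>ys. g ys - Tbar (S N) ys)) \<longlonglongrightarrow> 0"
  shows "Tbar F = g"
proof (rule Hspace_eqI[OF FBL_Hspace[OF Tbar_FBL[OF F]] FBL_Hspace[OF g]])
  obtain C where C: "\<And>f. f \<in> FBL \<Longrightarrow> fbl_norm (Tbar f) \<le> C * fbl_norm f"
    using Tbar_hom unfolding banach_lattice_hom_def by blast
  fix y :: "'b \<Rightarrow> real"
  assume y: "y \<in> Lstar"
  have "\<bar>Tbar F y - g y\<bar> \<le> C * fbl_norm (\<lambda>xs. F xs - S N xs) + fbl_norm (\<lambda>ys. g ys - Tbar (S N) ys)"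
    for N
  proof -
    define D where "D = (\<lambda>xs. F xs - S N xs)"
    have D_alt: "D = (\<lambda>xs. F xs + -1 * S N xs)"
      by (simp add: D_def)
    have D: "D \<in> FBL"
      unfolding D_alt by (intro FBL_add_gen F gen_scale S)
    have "Tbar D = (\<lambda>ys. Tbar F ys + -1 * Tbar (S N) ys)"
      unfolding D_alt by (simp only: Tbar_add[OF F gen_FBL[OF gen_scale[OF S]]] Tbar_scale[OF gen_FBL[OF S]])
    then have "\<bar>Tbar F y - Tbar (S N) y\<bar> \<le> fbl_norm (Tbar D)"
      using abs_le_fbl_norm[OF Hspace_bdd[OF FBL_Hspace[OF Tbar_FBL[OF D]]] y] by simp
    also have "\<dots> \<le> C * fbl_norm D"
      by (rule C[OF D])
    also have "\<dots> = C * fbl_norm (\<lambda>xs. F xs - S N xs)"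
      by (simp add: D_def)
    finally have "\<bar>Tbar F y - Tbar (S N) y\<bar> \<le> C * fbl_norm (\<lambda>xs. F xs - S N xs)" .
    moreover have "\<bar>g y - Tbar (S N) y\<bar> \<le> fbl_norm (\<lambda>ys. g ys - Tbar (S N) ys)"
      by (intro abs_le_fbl_norm[OF _ y] Hspace_bdd Hspace_diff FBL_Hspace g Tbar_FBL gen_FBL S)
    ultimately show ?thesis
      by arith
  qed
  moreover have "(\<lambda>N. C * fbl_norm (\<lambda>xs. F xs - S N xs) + fbl_norm (\<lambda>ys. g ys - Tbar (S N) ys))
      \<longlonglongrightarrow> 0"
    using tendsto_add_zero[OF tendsto_mult_right_zero[OF F_lim] g_lim] .
  ultimately have "\<bar>Tbar F y - g y\<bar> \<le> 0"
    by (intro LIMSEQ_le_const) auto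
  then show "Tbar F y = g y"
    by simp
qed

lemma FBL_subset_Tbar_image: "FBL \<subseteq> Tbar ` FBL"
proof
  fix g :: "('b \<Rightarrow> real) \<Rightarrow> real"
  assume g: "g \<in> FBL"
  obtain G where G: "\<And>n. G n \<in> gen_sublattice" "G 0 = (\<lambda>_. 0)"
    and G_lim: "(\<lambda>n. fbl_norm (\<lambda>ys. g ys - G n ys)) \<longlonglongrightarrow> 0"
    and G_summable: "summable (\<lambda>n. fbl_norm (\<lambda>ys. G (Suc n) ys - G n ys))"
    using FBL_telescoping_approximation[OF g] by blast
  define D where "D n = (\<lambda>ys. G (Suc n) ys - G n ys)" for n
  have "\<exists>h a b. h \<in> gen_sublattice \<and> Tbar h = D n \<and>
      (\<forall>x\<in>Lstar. \<bar>h x\<bar> \<le> fbl_norm (D n) * (\<bar>x a\<bar> + \<bar>x b\<bar>))" for n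
    by (rule Tbar_dominated_preimage[of "D n"]) (auto simp: D_def intro: gen_diff G(1))
  then obtain h a b where h: "\<And>n. h n \<in> gen_sublattice" "\<And>n. Tbar (h n) = D n"
    and h_dom: "\<And>n x. x \<in> Lstar \<Longrightarrow> \<bar>h n x\<bar> \<le> fbl_norm (D n) * (\<bar>x (a n)\<bar> + \<bar>x (b n)\<bar>)"
    by metis
  have D_nonneg: "0 \<le> fbl_norm (D n)" for n
    unfolding D_def by (intro fbl_norm_nonneg Hspace_bdd Hspace_diff gen_Hspace G(1))
  define F where "F = (\<lambda>xs. \<Sum>n. h n xs)"
  have F: "F \<in> FBL" and F_lim: "(\<lambda>N. fbl_norm (\<lambda>xs. F xs - (\<Sum>n<N. h n xs))) \<longlonglongrightarrow> 0"
    using gen_series_in_FBL[OF h(1) D_nonneg _ h_dom] G_summable unfolding F_def D_def by auto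
  have "Tbar (\<lambda>xs. \<Sum>n<N. h n xs) = G N" for N
  proof -
    have "(\<Sum>n<N. D n ys) = G N ys" for ys
      using sum_lessThan_telescope[of "\<lambda>n. G n ys" N] by (simp add: D_def G(2))
    then show ?thesis
      using Tbar_sum[of h N, OF h(1)] by (simp add: h(2))
  qed
  then have "Tbar F = g"
    using Tbar_eq_limit[OF F g gen_sum[of h, OF h(1)] F_lim] G_lim by simp
  then show "g \<in> Tbar ` FBL"
    using F by blast
qed

end

theorem mainTheorem16:
  fixes T :: "'a::distrib_lattice \<Rightarrow> 'b::distrib_lattice"
    and Tbar :: "(('a \<Rightarrow> real) \<Rightarrow> real) \<Rightarrow> (('b \<Rightarrow> real) \<Rightarrow> real)"
  assumes "lattice_hom T"
    and "surj T"
    and "banach_lattice_hom Tbar"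
    and "\<And>x. Tbar (delta x) = delta (T x)"
  shows "Tbar ` FBL = FBL"
proof -
  interpret induced_fbl_hom T Tbar
    using assms by unfold_locales
  show ?thesis
    using Tbar_FBL FBL_subset_Tbar_image by blast
qed

end
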